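(* Let $0\le r\le n$. The operators $K_{rj}$, $j=0,1,\dots,r$, form a basis of the vector space $\mathcal L_{r,r}$; in particular $\dim\mathcal L_{r,r}=r+1$.
   Context: $D=d/dx$. For $s\ge0$, $\mathcal P_s$ is the space of real polynomials in $x$ of degree at most $s$, and $\mathcal P_s=\{0\}$ for $s<0$. For $0\le m\le r$, $\mathcal L_{r,m}$ denotes the real vector space of linear differential operators $L=\sum_{i=0}^r a_i(x)D^i$ with $a_i\in\mathbb R[x]$ (order at most $r$) such that $L(\mathcal P_n)\subset\mathcal P_{n-m}$ (deficiency at least $m$ relative to $\mathcal P_n$). Pochhammer operator: $(a-xD)_k=(-1)^k(xD-a)(xD-(a-1))\cdots(xD-(a-k+1))$. $K_{rj}=\frac{1}{(r-j)!}(n-j-xD)_{r-j}D^j$. *)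

theory Defs
  imports "HOL-Computational_Algebra.Polynomial" "HOL-Library.Function_Algebras"
begin

definition diffop :: "nat \<Rightarrow> (nat \<Rightarrow> real poly) \<Rightarrow> real poly \<Rightarrow> real poly" where
  "diffop r a p = (\<Sum>i\<le>r. a i * (pderiv ^^ i) p)"

text \<open>The space L_{r,m} (relative to P_n): operators of order at most r mapping
  P_n into P_{n-m}, where P_s = {0} for s < 0.\<close>

definition Lrm :: "nat \<Rightarrow> nat \<Rightarrow> nat \<Rightarrow> (real poly \<Rightarrow> real poly) set" where
  "Lrm n r m = {L. (\<exists>a. L = diffop r a) \<and>
      (\<forall>p. degree p \<le> n \<longrightarrow>
          (if m \<le> n then degree (L p) \<le> n - m else L p = 0))}"

definition op_scale :: "real \<Rightarrow> (real poly \<Rightarrow> real poly) \<Rightarrow> (real poly \<Rightarrow> real poly)" where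
  "op_scale c L = (\<lambda>p. smult c (L p))"

definition xD :: "real poly \<Rightarrow> real poly" where
  "xD p = [:0, 1:] * pderiv p"

text \<open>Pochhammer operator (a - xD)_k = prod_{i<k} ((a - i) - xD) (factors commute).\<close>

fun poch_op :: "real \<Rightarrow> nat \<Rightarrow> real poly \<Rightarrow> real poly" where
  "poch_op a 0 p = p"
| "poch_op a (Suc k) p = poch_op a k (smult (a - of_nat k) p - xD p)"

definition Kop :: "nat \<Rightarrow> nat \<Rightarrow> nat \<Rightarrow> real poly \<Rightarrow> real poly" where
  "Kop n r j p = smult (1 / fact (r - j))
      (poch_op (of_nat n - of_nat j) (r - j) ((pderiv ^^ j) p))"

lemma vector_space_op_scale: "vector_space op_scale"
  by unfold_locales (auto simp: op_scale_def fun_eq_iff smult_add_right smult_add_left)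

end

theory Submission
  imports Defs
begin

(* Each K_{rj} is an operator of order r, and on monomials
   K_{rj} x^k = k(k-1)...(k-j+1) binom(n-k, r-j) x^(k-j), which vanishes as soon as k - j > n - r;
   so K_{rj} lies in L_{r,r}.  The functionals L |-> [x^0] L(x^j), j <= r, are biorthogonal to the
   K_{rj} up to nonzero factors, so everything follows once they separate the points of L_{r,r}.
   If L = sum_l a_l D^l in L_{r,r} is killed by all of them, fix a shift: the coefficient of
   x^(k+t-i) in L(x^k) is a polynomial of degree <= r in k, a combination of falling factorials
   whose coefficients run along a diagonal of the coefficient array of the a_l.  It vanishes at
   r+1 points of [0, n] (where the shift is negative, where it is zero by hypothesis, and where it
   exceeds n - r by the degree condition), hence identically, and the independence of the falling
   factorials forces a = 0. *)

lemma (in vector_space) basis_if_biorthogonal: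
  fixes f :: "nat \<Rightarrow> 'b" and \<phi> :: "nat \<Rightarrow> 'b \<Rightarrow> 'a"
  assumes W: "subspace W" and f_W: "\<And>i. i \<le> r \<Longrightarrow> f i \<in> W"
    and \<phi>_add: "\<And>j x y. \<phi> j (x + y) = \<phi> j x + \<phi> j y"
    and \<phi>_scale: "\<And>j c x. \<phi> j (scale c x) = c * \<phi> j x"
    and \<phi>_f: "\<And>i j. i \<noteq> j \<Longrightarrow> \<phi> j (f i) = 0"
    and \<phi>_f_self: "\<And>j. j \<le> r \<Longrightarrow> \<phi> j (f j) \<noteq> 0"
    and \<phi>_separates: "\<And>w. w \<in> W \<Longrightarrow> (\<And>j. j \<le> r \<Longrightarrow> \<phi> j w = 0) \<Longrightarrow> w = 0"
  shows "inj_on f {..r} \<and> independent (f ` {..r}) \<and> span (f ` {..r}) = W \<and> dim W = r + 1"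
proof -
  have \<phi>_0: "\<phi> j 0 = 0" for j
    using \<phi>_scale[of j 0 0] by simp
  have \<phi>_sum: "\<phi> j (sum g A) = (\<Sum>i\<in>A. \<phi> j (g i))" for j and g :: "nat \<Rightarrow> 'b" and A
    by (induction A rule: infinite_finite_induct) (simp_all add: \<phi>_0 \<phi>_add)
  have \<phi>_combination: "\<phi> j (\<Sum>i\<le>r. scale (u i) (f i)) = u j * \<phi> j (f j)" if "j \<le> r" for j u
  proof -
    have "\<phi> j (\<Sum>i\<le>r. scale (u i) (f i)) = (\<Sum>i\<le>r. u i * \<phi> j (f i))"
      by (simp add: \<phi>_sum \<phi>_scale)
    also have "\<dots> = (\<Sum>i\<le>r. if i = j then u j * \<phi> j (f j) else 0)"
      by (rule sum.cong) (simp_all add: \<phi>_f)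
    finally show ?thesis using that by simp
  qed
  have inj: "inj_on f {..r}"
    by (rule inj_onI) (metis \<phi>_f \<phi>_f_self atMost_iff)
  have "independent (f ` {..r})"
  proof (rule independent_if_scalars_zero)
    fix u x assume "(\<Sum>x\<in>f ` {..r}. scale (u x) x) = 0" and "x \<in> f ` {..r}"
    then obtain j where "j \<le> r" "x = f j" "(\<Sum>i\<le>r. scale (u (f i)) (f i)) = 0"
      by (auto simp: sum.reindex[OF inj])
    then show "u x = 0"
      using \<phi>_combination[of j "u \<circ> f"] \<phi>_0[of j] \<phi>_f_self[of j] by simp
  qed simp
  moreover have "span (f ` {..r}) \<subseteq> W"
    using W f_W by (intro span_minimal) auto
  moreover have "W \<subseteq> span (f ` {..r})"
  proof
    fix w assume "w \<in> W"
    define s where "s = (\<Sum>i\<le>r. scale (\<phi> i w / \<phi> i (f i)) (f i))"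
    have s_span: "s \<in> span (f ` {..r})"
      unfolding s_def by (intro span_sum span_scale span_base) auto
    have "w - s = 0"
    proof (rule \<phi>_separates)
      show "w - s \<in> W" using \<open>w \<in> W\<close> s_span \<open>span (f ` {..r}) \<subseteq> W\<close> W
        by (auto intro: subspace_diff)
      fix j assume "j \<le> r"
      have "\<phi> j (w - s) + \<phi> j s = \<phi> j w" by (simp flip: \<phi>_add)
      then show "\<phi> j (w - s) = 0"
        unfolding s_def using \<phi>_combination[OF \<open>j \<le> r\<close>] \<phi>_f_self[OF \<open>j \<le> r\<close>] by simp
    qed
    then show "w \<in> span (f ` {..r})" using s_span by simp
  qed
  ultimately show ?thesis
    using inj f_W by (auto intro!: dim_unique[of "f ` {..r}"] simp: card_image)
qed

definition falling_poly :: "nat \<Rightarrow> 'a::comm_ring_1 poly" where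
  "falling_poly i = (\<Prod>j<i. [:- of_nat j, 1:])"

lemma poly_falling_poly: "poly (falling_poly i) x = (\<Prod>j<i. x - of_nat j)"
  by (simp add: falling_poly_def poly_prod)

lemma poly_falling_poly_eq_0: "k < i \<Longrightarrow> poly (falling_poly i) (of_nat k) = 0"
  unfolding poly_falling_poly by (rule prod_zero) auto

lemma poly_falling_poly_self_neq_0:
  "poly (falling_poly i) (of_nat i :: 'a::{idom,ring_char_0}) \<noteq> 0"
  by (simp add: poly_falling_poly prod_zero_iff)

lemma degree_falling_poly_le: "degree (falling_poly i :: 'a::comm_ring_1 poly) \<le> i"
proof (induction i)
  case (Suc i)
  have "degree (falling_poly (Suc i) :: 'a poly)
      \<le> degree (falling_poly i :: 'a poly) + degree [:- of_nat i :: 'a, 1:]"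
    unfolding falling_poly_def prod.lessThan_Suc by (rule degree_mult_le)
  also have "\<dots> \<le> Suc i" using Suc by simp
  finally show ?case .
qed (simp add: falling_poly_def)

lemma higher_pderiv_monom_falling:
  "(pderiv ^^ i) (monom c k) = monom (c * poly (falling_poly i) (of_nat k)) (k - i)"
proof (induction i)
  case (Suc i)
  have "of_nat (k - i) * poly (falling_poly i) (of_nat k) = poly (falling_poly (Suc i)) (of_nat k :: 'a)"
  proof (cases "i \<le> k")
    case True
    then show ?thesis by (simp add: poly_falling_poly of_nat_diff mult.commute)
  qed (simp add: poly_falling_poly_eq_0)
  then show ?case using Suc by (simp add: pderiv_monom mult_ac)
qed (simp add: falling_poly_def)

lemma falling_poly_coeffs_eq_0:
  fixes c :: "nat \<Rightarrow> 'a::{idom,ring_char_0}"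
  assumes "(\<Sum>l\<le>r. smult (c l) (falling_poly l)) = 0" and "i \<le> r"
  shows "c i = 0"
  using \<open>i \<le> r\<close>
proof (induction i rule: less_induct)
  case (less i)
  have "(\<Sum>l\<le>r. c l * poly (falling_poly l) (of_nat i)) = 0"
    using arg_cong[OF assms(1), of "\<lambda>p. poly p (of_nat i)"] by (simp add: poly_sum)
  moreover have "c l * poly (falling_poly l) (of_nat i) = 0" if "l \<le> r" "l \<noteq> i" for l
    using that less by (cases "l < i") (simp_all add: poly_falling_poly_eq_0)
  ultimately have "c i * poly (falling_poly i) (of_nat i) = 0"
    using less.prems by (simp add: sum.remove[of "{..r}" i] sum.neutral)
  then show ?case using poly_falling_poly_self_neq_0 by auto
qed

lemma smult_sum_right: "smult c (sum f A) = (\<Sum>x\<in>A. smult c (f x))"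
  by (induction A rule: infinite_finite_induct) (simp_all add: smult_add_right)

lemma pderiv_sum: "pderiv (sum f A) = (\<Sum>x\<in>A. pderiv (f x))"
  by (induction A rule: infinite_finite_induct) (simp_all add: pderiv_add)

lemma diffop_add: "diffop r a (p + q) = diffop r a p + diffop r a q"
  by (simp add: diffop_def higher_pderiv_add distrib_left sum.distrib)

lemma diffop_smult: "diffop r a (smult c p) = smult c (diffop r a p)"
  by (simp add: diffop_def higher_pderiv_smult smult_sum_right)

lemma diffop_sum: "diffop r a (sum f A) = (\<Sum>x\<in>A. diffop r a (f x))"
  by (induction A rule: infinite_finite_induct) (auto simp: diffop_add diffop_def[of r a 0])

lemma diffop_add_coeffs: "diffop r (\<lambda>i. a i + b i) p = diffop r a p + diffop r b p"
  by (simp add: diffop_def distrib_right sum.distrib)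

lemma diffop_diff_coeffs: "diffop r (\<lambda>i. a i - b i) p = diffop r a p - diffop r b p"
  by (simp add: diffop_def left_diff_distrib sum_subtractf)

lemma diffop_mult_coeffs: "diffop r (\<lambda>i. q * a i) p = q * diffop r a p"
  by (simp add: diffop_def sum_distrib_left mult.assoc)

lemma diffop_smult_coeffs: "diffop r (\<lambda>i. smult c (a i)) p = smult c (diffop r a p)"
  by (simp add: diffop_def smult_sum_right)

lemma diffop_zero_coeffs: "diffop r (\<lambda>_. 0) = 0"
  by (simp add: fun_eq_iff diffop_def)

lemma Lrm_subspace: "module.subspace op_scale (Lrm n r m)"
proof -
  interpret vector_space op_scale by (rule vector_space_op_scale)
  show ?thesis
  proof (rule subspaceI)
    show "0 \<in> Lrm n r m"
      unfolding Lrm_def by (auto simp: diffop_zero_coeffs intro!: exI[of _ "\<lambda>_. 0"])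
  next
    fix L M assume L: "L \<in> Lrm n r m" and M: "M \<in> Lrm n r m"
    then obtain a b where "L = diffop r a" "M = diffop r b" unfolding Lrm_def by blast
    then have "L + M = diffop r (\<lambda>i. a i + b i)" by (simp add: fun_eq_iff diffop_add_coeffs)
    moreover have "if m \<le> n then degree ((L + M) p) \<le> n - m else (L + M) p = 0" if "degree p \<le> n" for p
      using L M that unfolding Lrm_def by (auto intro: degree_add_le)
    ultimately show "L + M \<in> Lrm n r m" unfolding Lrm_def by blast
  next
    fix c L assume L: "L \<in> Lrm n r m"
    then obtain a where "L = diffop r a" unfolding Lrm_def by blast
    then have "op_scale c L = diffop r (\<lambda>i. smult c (a i))"
      by (simp add: fun_eq_iff op_scale_def diffop_smult_coeffs)
    moreover have "if m \<le> n then degree (op_scale c L p) \<le> n - m else op_scale c L p = 0"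
      if "degree p \<le> n" for p
      using L that unfolding Lrm_def op_scale_def by (auto intro: order.trans[OF degree_smult_le])
    ultimately show "op_scale c L \<in> Lrm n r m" unfolding Lrm_def by blast
  qed
qed

lemma diffop_Suc_extend: "diffop s a = diffop (Suc s) (\<lambda>i. if i \<le> s then a i else 0)"
  by (simp add: fun_eq_iff diffop_def sum.atMost_Suc)

lemma higher_pderiv_eq_diffop: "(pderiv ^^ j) = diffop j (\<lambda>i. if i = j then 1 else 0)"
  by (simp add: fun_eq_iff diffop_def if_distrib[of "\<lambda>c. c * _"] cong: if_cong)

lemma pderiv_diffop:
  "pderiv (diffop s a p) =
     diffop (Suc s) (\<lambda>i. (if i \<le> s then pderiv (a i) else 0) + (if i = 0 then 0 else a (i - 1))) p"
proof -
  have "diffop (Suc s) (\<lambda>i. (if i \<le> s then pderiv (a i) else 0) + (if i = 0 then 0 else a (i - 1))) p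
      = (\<Sum>i\<le>Suc s. (if i \<le> s then pderiv (a i) else 0) * (pderiv ^^ i) p)
        + (\<Sum>i\<le>Suc s. (if i = 0 then 0 else a (i - 1)) * (pderiv ^^ i) p)"
    by (simp add: diffop_def distrib_right sum.distrib)
  also have "\<dots> = (\<Sum>i\<le>s. pderiv (a i) * (pderiv ^^ i) p) + (\<Sum>i\<le>s. a i * (pderiv ^^ Suc i) p)"
    by (simp only: sum.atMost_Suc_shift[of "\<lambda>i. (if i = 0 then 0 else a (i - 1)) * (pderiv ^^ i) p"])
       (simp add: sum.atMost_Suc del: funpow.simps)
  also have "\<dots> = pderiv (diffop s a p)"
    by (simp add: diffop_def pderiv_sum pderiv_mult sum.distrib mult.commute)
  finally show ?thesis ..
qed

lemma euler_step_diffop: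
  "\<exists>b. (\<lambda>p. smult c (diffop s a p) - xD (diffop s a p)) = diffop (Suc s) b"
proof -
  define a' where "a' i = (if i \<le> s then a i else 0)" for i
  define d where "d i = (if i \<le> s then pderiv (a i) else 0) + (if i = 0 then 0 else a (i - 1))" for i
  have "smult c (diffop s a p) - xD (diffop s a p) = diffop (Suc s) (\<lambda>i. smult c (a' i) - [:0, 1:] * d i) p"
    for p
    unfolding diffop_diff_coeffs diffop_smult_coeffs diffop_mult_coeffs xD_def pderiv_diffop a'_def d_def
    by (subst diffop_Suc_extend) (rule refl)
  then show ?thesis by blast
qed

lemma poch_op_diffop: "\<exists>b. (\<lambda>p. poch_op c k (diffop s a p)) = diffop (s + k) b"
proof (induction k arbitrary: s a)
  case (Suc k)
  obtain b where b: "(\<lambda>p. smult (c - of_nat k) (diffop s a p) - xD (diffop s a p)) = diffop (Suc s) b"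
    using euler_step_diffop by blast
  have "poch_op c (Suc k) (diffop s a p) = poch_op c k (diffop (Suc s) b p)" for p
    using fun_cong[OF b, of p] by simp
  then show ?case using Suc.IH[of "Suc s" b] by (simp add: fun_eq_iff)
qed auto

lemma degree_diffop_le_if_monoms:
  assumes "\<And>k. k \<le> n \<Longrightarrow> degree (diffop r a (monom 1 k)) \<le> d" and "degree p \<le> n"
  shows "degree (diffop r a p) \<le> d"
proof -
  have "diffop r a p = (\<Sum>k\<le>degree p. smult (coeff p k) (diffop r a (monom 1 k)))"
    by (subst poly_as_sum_of_monoms[of p, symmetric]) (simp add: diffop_sum smult_monom flip: diffop_smult)
  also have "degree \<dots> \<le> d"
    by (rule degree_sum_le) (use assms in \<open>auto intro: order.trans[OF degree_smult_le]\<close>)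
  finally show ?thesis .
qed

lemma coeff_diffop_monom:
  "coeff (diffop r a (monom 1 k)) t =
     (\<Sum>l\<le>r. if t < k - l then 0 else poly (falling_poly l) (real k) * coeff (a l) (t - (k - l)))"
  by (simp add: diffop_def higher_pderiv_monom_falling coeff_sum mult.commute[of "a _"] coeff_monom_mult)

definition diagonal_poly :: "nat \<Rightarrow> (nat \<Rightarrow> real poly) \<Rightarrow> nat \<Rightarrow> nat \<Rightarrow> real poly" where
  "diagonal_poly r a t i =
     (\<Sum>l\<le>r. smult (if i \<le> t + l then coeff (a l) (t + l - i) else 0) (falling_poly l))"

lemma degree_diagonal_poly_le: "degree (diagonal_poly r a t i) \<le> r"
  unfolding diagonal_poly_def
  by (rule degree_sum_le) (auto intro: order.trans[OF degree_smult_le] order.trans[OF degree_falling_poly_le])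

lemma coeff_diffop_monom_eq_diagonal_poly:
  assumes "i \<le> k + t"
  shows "coeff (diffop r a (monom 1 k)) (k + t - i) = poly (diagonal_poly r a t i) (real k)"
  unfolding coeff_diffop_monom diagonal_poly_def poly_sum
proof (rule sum.cong)
  fix l
  show "(if k + t - i < k - l then 0 else poly (falling_poly l) (real k) * coeff (a l) (k + t - i - (k - l))) =
      poly (smult (if i \<le> t + l then coeff (a l) (t + l - i) else 0) (falling_poly l)) (real k)"
    using assms by (cases "l \<le> k") (auto simp: poly_falling_poly_eq_0)
qed simp

lemma poly_diagonal_poly_eq_0: "k + t < i \<Longrightarrow> poly (diagonal_poly r a t i) (real k) = 0"
  unfolding diagonal_poly_def poly_sum by (rule sum.neutral) (auto simp: poly_falling_poly_eq_0)

lemma card_window_complement: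
  assumes "r \<le> n" and "i \<le> r"
  shows "r < card {k. k \<le> n \<and> (k + t \<le> i \<or> i + (n - r) < k + t)}"
proof -
  define g where "g j = (if j + t \<le> i then j else j + (n - r))" for j
  have "inj_on g {..r}"
    by (rule inj_onI) (auto simp: g_def split: if_splits)
  moreover have "g ` {..r} \<subseteq> {k. k \<le> n \<and> (k + t \<le> i \<or> i + (n - r) < k + t)}"
    using assms by (auto simp: g_def)
  ultimately have "card {..r} \<le> card {k. k \<le> n \<and> (k + t \<le> i \<or> i + (n - r) < k + t)}"
    by (intro card_inj_on_le) auto
  then show ?thesis by simp
qed

lemma diffop_coeff_eq_0_if_coeff_0_monoms:
  assumes "r \<le> n" and "i \<le> r"
    and deg: "\<And>p. degree p \<le> n \<Longrightarrow> degree (diffop r a p) \<le> n - r"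
    and at_0: "\<And>j. j \<le> r \<Longrightarrow> coeff (diffop r a (monom 1 j)) 0 = 0"
  shows "a i = 0"
proof (rule poly_eqI)
  fix t
  define R where "R = {k. k \<le> n \<and> (k + t \<le> i \<or> i + (n - r) < k + t)}"
  have root: "poly (diagonal_poly r a t i) (real k) = 0" if k: "k \<in> R" for k
  proof -
    consider "k + t < i" | "k + t = i" | "i + (n - r) < k + t" "k \<le> n"
      using k by (fastforce simp: R_def)
    then show ?thesis
    proof cases
      case 1
      then show ?thesis by (rule poly_diagonal_poly_eq_0)
    next
      case 2
      then have "poly (diagonal_poly r a t i) (real k) = coeff (diffop r a (monom 1 k)) 0"
        using coeff_diffop_monom_eq_diagonal_poly[of i k t] by simp
      also have "\<dots> = 0" using 2 \<open>i \<le> r\<close> by (intro at_0) simp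
      finally show ?thesis .
    next
      case 3
      have "degree (diffop r a (monom 1 k)) \<le> n - r"
        using 3 by (intro deg order.trans[OF degree_monom_le])
      then have "coeff (diffop r a (monom 1 k)) (k + t - i) = 0"
        using 3 by (intro coeff_eq_0) linarith
      then show ?thesis using 3 coeff_diffop_monom_eq_diagonal_poly[of i k t] by simp
    qed
  qed
  have "card (real ` R) = card R" by (simp add: card_image)
  then have "diagonal_poly r a t i = 0"
    using card_window_complement[OF assms(1,2), of t] degree_diagonal_poly_le[of r a t i] root
    by (intro poly_eqI_degree[of "real ` R"]) (auto simp: R_def)
  then have "(if i \<le> t + i then coeff (a i) (t + i - i) else 0) = 0"
    unfolding diagonal_poly_def using \<open>i \<le> r\<close> by (rule falling_poly_coeffs_eq_0)
  then show "coeff (a i) t = coeff 0 t" by simp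
qed

lemma Lrm_eq_0_if_coeff_0_monoms:
  assumes "r \<le> n" and "L \<in> Lrm n r r" and "\<And>j. j \<le> r \<Longrightarrow> coeff (L (monom 1 j)) 0 = 0"
  shows "L = 0"
proof -
  obtain a where a: "L = diffop r a" and "\<And>p. degree p \<le> n \<Longrightarrow> degree (diffop r a p) \<le> n - r"
    using assms(1,2) unfolding Lrm_def by auto
  then have "a i = 0" if "i \<le> r" for i
    using that assms(1,3) by (intro diffop_coeff_eq_0_if_coeff_0_monoms[of r n]) auto
  then show "L = 0" unfolding a by (simp add: fun_eq_iff diffop_def)
qed

lemma xD_monom: "xD (monom c s) = monom (of_nat s * c) s"
  by (cases s) (simp_all add: xD_def pderiv_monom flip: monom_Suc)

lemma poch_op_monom: "poch_op c k (monom d s) = monom (d * (\<Prod>l<k. c - of_nat l - of_nat s)) s"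
proof (induction k arbitrary: d)
  case (Suc k)
  have "smult (c - of_nat k) (monom d s) - xD (monom d s) = monom (d * (c - of_nat k - of_nat s)) s"
    by (simp add: xD_monom smult_monom diff_monom algebra_simps)
  then show ?case using Suc by (simp add: mult_ac)
qed simp

lemma Kop_monom:
  "Kop n r j (monom 1 k) = monom (poly (falling_poly j) (real k)
     * (\<Prod>l<r-j. real n - real j - real l - real (k - j)) / fact (r - j)) (k - j)"
  by (simp add: Kop_def higher_pderiv_monom_falling poch_op_monom smult_monom)

lemma Kop_is_diffop: "j \<le> r \<Longrightarrow> \<exists>b. Kop n r j = diffop r b"
proof -
  assume "j \<le> r"
  obtain b where b: "(\<lambda>p. poch_op (real n - real j) (r - j) (diffop j (\<lambda>i. if i = j then 1 else 0) p))
      = diffop (j + (r - j)) b"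
    using poch_op_diffop by blast
  have "Kop n r j = diffop r (\<lambda>i. smult (1 / fact (r - j)) (b i))"
    using b \<open>j \<le> r\<close> by (simp add: fun_eq_iff Kop_def diffop_smult_coeffs flip: higher_pderiv_eq_diffop)
  then show ?thesis by blast
qed

lemma degree_Kop_monom_le:
  assumes "r \<le> n" "j \<le> r" "k \<le> n"
  shows "degree (Kop n r j (monom 1 k)) \<le> n - r"
proof (cases "k - j \<le> n - r")
  case True
  then show ?thesis unfolding Kop_monom by (rule order.trans[OF degree_monom_le])
next
  case False
  then have "j \<le> k" "n - k < r - j" using assms by auto
  then have "(\<Prod>l<r-j. real n - real j - real l - real (k - j)) = 0"
    by (intro prod_zero bexI[of _ "n - k"]) (auto simp: of_nat_diff assms)
  then show ?thesis by (simp only: Kop_monom) simp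
qed

lemma Kop_in_Lrm:
  assumes "r \<le> n" "j \<le> r"
  shows "Kop n r j \<in> Lrm n r r"
proof -
  obtain b where b: "Kop n r j = diffop r b" using Kop_is_diffop[OF assms(2)] by blast
  have "degree (diffop r b p) \<le> n - r" if "degree p \<le> n" for p
    using degree_Kop_monom_le[OF assms] unfolding b by (rule degree_diffop_le_if_monoms[OF _ that])
  then show ?thesis unfolding Lrm_def b using assms(1) by auto
qed

lemma coeff_Kop_monom_0_eq_0: "i \<noteq> j \<Longrightarrow> coeff (Kop n r i (monom 1 j)) 0 = 0"
  by (cases "j < i") (simp_all add: Kop_monom poly_falling_poly_eq_0)

lemma coeff_Kop_monom_self_0_neq_0:
  assumes "r \<le> n" "j \<le> r"
  shows "coeff (Kop n r j (monom 1 j)) 0 \<noteq> 0"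
  using assms poly_falling_poly_self_neq_0[of j, where 'a=real]
  by (auto simp: Kop_monom prod_zero_iff)

theorem mainTheorem17:
  fixes n r :: nat
  assumes "r \<le> n"
  shows "(\<forall>j\<le>r. Kop n r j \<in> Lrm n r r)
    \<and> inj_on (Kop n r) {..r}
    \<and> module.independent op_scale (Kop n r ` {..r})
    \<and> module.span op_scale (Kop n r ` {..r}) = Lrm n r r
    \<and> vector_space.dim op_scale (Lrm n r r) = r + 1"
proof -
  interpret vector_space op_scale by (rule vector_space_op_scale)
  have "inj_on (Kop n r) {..r} \<and> independent (Kop n r ` {..r}) \<and> span (Kop n r ` {..r}) = Lrm n r r
      \<and> dim (Lrm n r r) = r + 1"
    by (rule basis_if_biorthogonal[where \<phi> = "\<lambda>j L. coeff (L (monom 1 j)) 0"])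
       (use Lrm_subspace Kop_in_Lrm[OF assms] coeff_Kop_monom_0_eq_0
          coeff_Kop_monom_self_0_neq_0[OF assms] Lrm_eq_0_if_coeff_0_monoms[OF assms]
        in \<open>auto simp: op_scale_def\<close>)
  then show ?thesis using Kop_in_Lrm[OF assms] by blast
qed

end
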